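(* For all $k\in\mathbb{N}$, the vector $c^{(k)}\in\mathbb{R}^{2^k-1}$ satisfies $\sum_{j} c^{(k)}_j=2(\rho^k-1)$ and $c^{(k)}\ge\pi^{(k)}$ entrywise.
   Context: $\rho=1+\sqrt{2}$. The silver stepsizes are $\alpha_t=\rho^{\nu(t+1)-1}+1$ for $t\ge0$, where $\nu(i)$ is the largest integer $j$ with $2^j\mid i$. For $k\in\mathbb{N}$ and $n=2^k-1$, $\pi^{(k)}=[\alpha_0,\dots,\alpha_{n-1}]\in\mathbb{R}^n$ (so $\pi^{(k+1)}=[\pi^{(k)},\rho^{k-1}+1,\pi^{(k)}]$ and $\sum\pi^{(k)}=\rho^k-1$). The sequence $c^{(k)}\in\mathbb{R}^n$ is defined recursively by $c^{(1)}=[2(\rho-1)]$ and $c^{(k+1)}=\big[\pi^{(k)},\ (1+\rho^{-k})(\rho^{k-1}+1),\ \rho c^{(k)}-(\rho-1-\rho^{-k})\pi^{(k)}\big]$ (concatenation). *)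

theory Defs
  imports Complex_Main
begin

definition silver_rho :: real where
  "silver_rho = 1 + sqrt 2"

text \<open>nu i: largest j with 2^j dividing i (used for i >= 1).\<close>
definition nu :: "nat \<Rightarrow> nat" where
  "nu i = (GREATEST j. (2::nat) ^ j dvd i)"

definition silver_alpha :: "nat \<Rightarrow> real" where
  "silver_alpha t = silver_rho powi (int (nu (t + 1)) - 1) + 1"

definition silver_pi :: "nat \<Rightarrow> real list" where
  "silver_pi k = map silver_alpha [0..<2 ^ k - 1]"

text \<open>c^(k), defined for k >= 1; the value at k = 0 is an unused placeholder.\<close>
fun silver_c :: "nat \<Rightarrow> real list" where
  "silver_c 0 = []"
| "silver_c (Suc 0) = [2 * (silver_rho - 1)]"
| "silver_c (Suc (Suc k)) =
     silver_pi (Suc k)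
     @ [(1 + inverse (silver_rho ^ Suc k)) * (silver_rho ^ k + 1)]
     @ map2 (\<lambda>x p. silver_rho * x - (silver_rho - 1 - inverse (silver_rho ^ Suc k)) * p)
            (silver_c (Suc k)) (silver_pi (Suc k))"

end

(* Since nu (2^k + m) = nu m for 0 < m < 2^k, the stepsizes satisfy
   pi^(k+1) = [pi^(k), rho^(k-1) + 1, pi^(k)], and rho^2 = 2 rho + 1 then gives
   sum pi^(k) = rho^k - 1.  Both claims about c^(k) follow by induction along its
   recursion: for the sum, 1/rho = rho - 2 turns rho^(k-1) into (rho - 2) rho^k, after
   which the sum of the three blocks is a field identity in rho and rho^k; for the
   entrywise bound, the third block rho c - b pi with b <= rho - 1 dominates pi because
   c >= pi >= 0 and rho >= 1. *)

theory Submission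
  imports Defs
begin

lemma silver_rho_pos: "silver_rho > 0"
  by (simp add: silver_rho_def add_pos_nonneg)

lemma silver_rho_ge_1: "silver_rho \<ge> 1"
  by (simp add: silver_rho_def)

lemma silver_rho_squared: "silver_rho\<^sup>2 = 2 * silver_rho + 1"
  by (simp add: silver_rho_def power2_eq_square algebra_simps)

lemma inverse_silver_rho: "inverse silver_rho = silver_rho - 2"
proof (rule inverse_unique)
  show "silver_rho * (silver_rho - 2) = 1"
    using silver_rho_squared by (simp add: power2_eq_square algebra_simps)
qed

lemma silver_rho_powi_recurrence:
  "silver_rho powi (m + 1) = 2 * silver_rho powi m + silver_rho powi (m - 1)"
proof -
  have "silver_rho powi (m + 1) = silver_rho powi (m - 1) * silver_rho\<^sup>2"
    using silver_rho_pos power_int_add[of silver_rho "m - 1" 2] by (simp add: add.commute)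
  then show ?thesis
    using silver_rho_pos power_int_add_1[of silver_rho "m - 1"]
    by (simp add: silver_rho_squared algebra_simps)
qed

lemma nu_eqI:
  assumes "2 ^ j dvd i" and "\<not> 2 ^ Suc j dvd i"
  shows "nu i = j"
  unfolding nu_def
proof (rule Greatest_equality)
  fix y assume "(2::nat) ^ y dvd i"
  with assms(2) show "y \<le> j"
    by (metis dvd_trans le_imp_power_dvd not_less_eq_eq)
qed fact

lemma
  assumes "i > 0"
  shows power_nu_dvd: "2 ^ nu i dvd i"
    and not_power_Suc_nu_dvd: "\<not> 2 ^ Suc (nu i) dvd i"
proof -
  have bounded: "y \<le> i" if "(2::nat) ^ y dvd i" for y
    using assms that dvd_imp_le less_exp[of y] by (metis less_imp_le_nat order.strict_trans2)
  show "2 ^ nu i dvd i"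
    unfolding nu_def by (rule GreatestI_nat[of _ 0]) (use bounded in auto)
  show "\<not> 2 ^ Suc (nu i) dvd i"
    unfolding nu_def using Greatest_le_nat bounded by (metis Suc_n_not_le_n)
qed

lemma nu_power_of_two: "nu (2 ^ k) = k"
  by (rule nu_eqI) auto

lemma nu_add_power_of_two:
  assumes "0 < m" and "m < 2 ^ k"
  shows "nu (2 ^ k + m) = nu m"
proof (rule nu_eqI)
  have "(2::nat) ^ nu m < 2 ^ k"
    using power_nu_dvd[OF assms(1)] assms by (meson dvd_imp_le order.strict_trans1)
  then have "(2::nat) ^ Suc (nu m) dvd 2 ^ k"
    by (intro le_imp_power_dvd) simp
  then show "2 ^ nu m dvd 2 ^ k + m" and "\<not> 2 ^ Suc (nu m) dvd 2 ^ k + m"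
    using power_nu_dvd[OF assms(1)] not_power_Suc_nu_dvd[OF assms(1)]
    by (auto simp: dvd_add_right_iff intro: dvd_trans[of _ "2 ^ Suc (nu m)"])
qed

lemma silver_alpha_pos: "silver_alpha t > 0"
  using silver_rho_pos by (simp add: silver_alpha_def add_pos_nonneg)

lemma silver_alpha_add_power_of_two:
  "t + 1 < 2 ^ k \<Longrightarrow> silver_alpha (t + 2 ^ k) = silver_alpha t"
  using nu_add_power_of_two[of "t + 1" k] by (simp add: silver_alpha_def add.commute)

lemma length_silver_pi: "length (silver_pi k) = 2 ^ k - 1"
  by (simp add: silver_pi_def)

lemma silver_pi_Suc:
  "silver_pi (Suc k) = silver_pi k @ [silver_rho powi (int k - 1) + 1] @ silver_pi k"
proof -
  let ?n = "2 ^ k - 1 :: nat"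
  have "2 ^ Suc k - 1 = 2 ^ k + ?n"
    by simp
  then have "[0..<2 ^ Suc k - 1] = [0..<2 ^ k] @ [2 ^ k..<2 ^ k + ?n]"
    by (simp only: upt_add_eq_append[of 0])
  also have "\<dots> = [0..<?n] @ [?n] @ map (\<lambda>t. t + 2 ^ k) [0..<?n]"
    by (simp add: map_add_upt add.commute upt_Suc_append[symmetric])
  finally have "[0..<2 ^ Suc k - 1] = [0..<?n] @ [?n] @ map (\<lambda>t. t + 2 ^ k) [0..<?n]" .
  moreover have "silver_alpha ?n = silver_rho powi (int k - 1) + 1"
    by (simp add: silver_alpha_def nu_power_of_two)
  moreover have "map (silver_alpha \<circ> (\<lambda>t. t + 2 ^ k)) [0..<?n] = map silver_alpha [0..<?n]"
    by (rule map_cong) (simp_all add: silver_alpha_add_power_of_two)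
  ultimately show ?thesis
    by (simp add: silver_pi_def)
qed

lemma sum_list_silver_pi: "sum_list (silver_pi k) = silver_rho ^ k - 1"
proof (induction k)
  case 0
  then show ?case by (simp add: silver_pi_def)
next
  case (Suc k)
  have "silver_rho ^ Suc k = silver_rho powi (int k + 1)"
    by (simp add: power_int_add_1 power_int_of_nat)
  also have "\<dots> = 2 * silver_rho ^ k + silver_rho powi (int k - 1)"
    by (simp add: silver_rho_powi_recurrence power_int_of_nat)
  finally have "silver_rho ^ Suc k = 2 * silver_rho ^ k + silver_rho powi (int k - 1)" .
  with Suc show ?case
    by (simp add: silver_pi_Suc)
qed

lemma sum_list_map2_linear:
  fixes a b :: "'a :: comm_ring"
  shows "length xs = length ys \<Longrightarrow>
    sum_list (map2 (\<lambda>x y. a * x - b * y) xs ys) = a * sum_list xs - b * sum_list ys"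
  by (induction xs ys rule: list_induct2) (simp_all add: algebra_simps)

lemma list_all2_le_map2_linear:
  fixes a b :: "'a :: linordered_idom"
  assumes "list_all2 (\<le>) ps cs" and "\<forall>p \<in> set ps. 0 \<le> p" and "1 \<le> a" and "b \<le> a - 1"
  shows "list_all2 (\<le>) ps (map2 (\<lambda>c p. a * c - b * p) cs ps)"
  using assms(1,2)
proof (induction ps cs rule: list_all2_induct)
  case (Cons p ps c cs)
  have "b * p \<le> (a - 1) * p" and "a * p \<le> a * c"
    using Cons.hyps Cons.prems assms(3,4) by (simp_all add: mult_right_mono mult_left_mono)
  then have "p \<le> a * c - b * p"
    by (simp add: algebra_simps)
  with Cons show ?case
    by simp
qed simp

lemma length_silver_c: "length (silver_c k) = 2 ^ k - 1"
  by (induction k rule: silver_c.induct) (simp_all add: length_silver_pi)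

lemma sum_list_silver_c: "sum_list (silver_c k) = 2 * (silver_rho ^ k - 1)"
proof (induction k rule: silver_c.induct)
  case (3 k)
  define y where "y = silver_rho ^ Suc k"
  have "y \<noteq> 0"
    using silver_rho_pos by (simp add: y_def)
  have "silver_rho ^ k = (silver_rho - 2) * y"
    using silver_rho_pos by (simp add: y_def flip: inverse_silver_rho)
  then have "sum_list (silver_c (Suc (Suc k))) =
      (y - 1) + (1 + inverse y) * ((silver_rho - 2) * y + 1)
      + silver_rho * (2 * (y - 1)) - (silver_rho - 1 - inverse y) * (y - 1)"
    using "3.IH"
    by (simp add: sum_list_map2_linear length_silver_c length_silver_pi sum_list_silver_pi y_def)
  also have "\<dots> = 2 * (silver_rho * y - 1)"
    using \<open>y \<noteq> 0\<close> by (simp add: field_simps)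
  finally show ?case
    by (simp add: y_def)
qed (simp_all add: silver_rho_def)

lemma silver_pi_le_silver_c: "list_all2 (\<le>) (silver_pi k) (silver_c k)"
proof (induction k rule: silver_c.induct)
  case 2
  have "silver_pi (Suc 0) = [inverse silver_rho + 1]"
    by (simp add: silver_pi_Suc[of 0] silver_pi_def[of 0] power_int_minus)
  moreover have "inverse silver_rho + 1 \<le> 2 * (silver_rho - 1)"
    using silver_rho_ge_1 by (simp add: inverse_silver_rho)
  ultimately show ?case
    by simp
next
  case (3 k)
  let ?e = "inverse (silver_rho ^ Suc k)"
  have "0 < ?e"
    using silver_rho_pos by simp
  then have middle: "silver_rho ^ k + 1 \<le> (1 + ?e) * (silver_rho ^ k + 1)"
    using silver_rho_pos by (simp add: algebra_simps add_pos_nonneg)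
  have "\<forall>p \<in> set (silver_pi (Suc k)). 0 \<le> p"
    using silver_alpha_pos by (auto simp: silver_pi_def less_imp_le)
  then have right: "list_all2 (\<le>) (silver_pi (Suc k))
      (map2 (\<lambda>c p. silver_rho * c - (silver_rho - 1 - ?e) * p) (silver_c (Suc k)) (silver_pi (Suc k)))"
    using "3.IH" silver_rho_ge_1 \<open>0 < ?e\<close> by (intro list_all2_le_map2_linear) auto
  show ?case
    unfolding silver_pi_Suc[of "Suc k"] silver_c.simps(3)
    using middle right by (intro list_all2_appendI) (simp_all add: list_all2_refl power_int_of_nat)
qed (simp add: silver_pi_def)

theorem lemma8:
  fixes k :: nat
  assumes "k \<ge> 1"
  shows "length (silver_c k) = 2 ^ k - 1
    \<and> sum_list (silver_c k) = 2 * (silver_rho ^ k - 1)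
    \<and> length (silver_pi k) = 2 ^ k - 1
    \<and> (\<forall>j < 2 ^ k - 1. silver_c k ! j \<ge> silver_pi k ! j)"
  using silver_pi_le_silver_c[of k]
  by (simp add: length_silver_c sum_list_silver_c length_silver_pi list_all2_conv_all_nth)

end
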